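(* The vector space $\mathcal{PA}$ can be naturally identified with the quotient $\mathcal{MPT}/[\mathcal{MPT},\mathcal{MPT}]$, where $[\mathcal{MPT},\mathcal{MPT}]$ is the span of the commutators $a\circ b-b\circ a$ with $a,b\in\mathcal{MPT}$. Under this identification, the map $\tau$ is the natural projection $\mathcal{MPT}\to\mathcal{MPT}/[\mathcal{MPT},\mathcal{MPT}]$; equivalently, $\tau:\mathcal{MPT}\to\mathcal{PA}$ is surjective with kernel $[\mathcal{MPT},\mathcal{MPT}]$.
   Context: Work over a fixed ground field. A planar rooted tree is a finite rooted tree, with edges oriented away from the root, together with a total order on the outgoing edges of each vertex. A planar aroma is an isomorphism class of finite connected directed graphs (loops allowed) in which every vertex has exactly one incoming edge, together with a total order on the outgoing edges of each vertex. $\mathcal{PA}$ denotes the span of planar aromas. A marked planar tree is a triple $(v,n,t)$, where $t$ is a planar tree, $v$ is a vertex of $t$, and $n\in\{1,\dots,|v|+1\}$ with $|v|$ the number of outgoing edges of $v$. $\mathcal{MPT}$ is the vector space spanned by marked planar trees. For planar trees $s,t$, $s\rhd_{v,n}t$ denotes the planar tree obtained by adding an edge from the vertex $v$ of $t$ to the root of $s$, inserted as the $n$-th outgoing edge of $v$. The marked planar tree $(v,n,t)$ represents the map $s\mapsto s\rhd_{v,n}t$. Composition of these maps gives the product \[ (v_1,n_1,t_1)\circ(v_2,n_2,t_2)=(v_2,n_2,\,t_2\rhd_{v_1,n_1}t_1) \] on $\mathcal{MPT}$. The linear map $\tau:\mathcal{MPT}\to\mathcal{PA}$ sends $(v,n,t)$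 to the planar aroma obtained from $t$ by adding an edge from $v$ to the root of $t$, inserted as the $n$-th outgoing edge of $v$. *)

theory Defs
  imports Main HOL.Modules "HOL-Library.Poly_Mapping"
begin

text \<open>A planar rooted tree (up to isomorphism) is a node with an ordered list of subtrees.
 Vertices are addressed by paths (0-based child indices from the root).\<close>

datatype ptree = Node "ptree list"

fun children :: "ptree \<Rightarrow> ptree list" where
  "children (Node ts) = ts"

lemma size_nth_less: "i < length ts \<Longrightarrow> size (ts ! i) < Suc (size_list size ts)"
  using size_list_estimation'[of "ts ! i" ts "size (ts ! i)" size] nth_mem[of i ts] by simp

function subtree :: "ptree \<Rightarrow> nat list \<Rightarrow> ptree option" where
  "subtree t [] = Some t"
| "subtree (Node ts) (i # p) = (if i < length ts then subtree (ts ! i) p else None)"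
  by pat_completeness auto
termination
  by (relation "measure (size \<circ> fst)") (auto dest: size_nth_less)

definition vertices :: "ptree \<Rightarrow> nat list set" where
  "vertices t = {p. subtree t p \<noteq> None}"

definition arity :: "ptree \<Rightarrow> nat list \<Rightarrow> nat" where
  "arity t v = length (children (the (subtree t v)))"

text \<open>graft s v n t = s \<rhd>_{v,n} t: add an edge from vertex v of t to the root of s,
  inserted as the n-th (1-based) outgoing edge of v.\<close>
function graft :: "ptree \<Rightarrow> nat list \<Rightarrow> nat \<Rightarrow> ptree \<Rightarrow> ptree" where
  "graft s [] n (Node ts) = Node (take (n - 1) ts @ s # drop (n - 1) ts)"
| "graft s (i # p) n (Node ts) =
     (if i < length ts then Node (ts[i := graft s p n (ts ! i)]) else Node ts)"
  by pat_completeness auto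
termination
  by (relation "measure (\<lambda>(s, p, n, t). size t)") (auto dest: size_nth_less)

definition marked :: "(nat list \<times> nat \<times> ptree) set" where
  "marked = {(v, n, t). v \<in> vertices t \<and> 1 \<le> n \<and> n \<le> arity t v + 1}"

typedef mpt = marked
  morphisms rep_mpt abs_mpt
  by (rule exI[of _ "([], 1, Node [])"]) (simp add: marked_def vertices_def arity_def)

text \<open>Product of basis elements: (v1,n1,t1) \<circ> (v2,n2,t2) = (v2,n2, t2 \<rhd>_{v1,n1} t1),
  where the vertex v2 of t2 is taken as the corresponding vertex of the grafted tree,
  namely the path v1 @ [n1-1] @ v2.\<close>
definition mpt_comp0 :: "mpt \<Rightarrow> mpt \<Rightarrow> mpt" where
  "mpt_comp0 a b = (case (rep_mpt a, rep_mpt b) of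
     ((v1, n1, t1), (v2, n2, t2)) \<Rightarrow> abs_mpt (v1 @ [n1 - 1] @ v2, n2, graft t2 v1 n1 t1))"

definition mpt_comp :: "(mpt \<Rightarrow>\<^sub>0 'k::field) \<Rightarrow> (mpt \<Rightarrow>\<^sub>0 'k) \<Rightarrow> (mpt \<Rightarrow>\<^sub>0 'k)" where
  "mpt_comp a b = (\<Sum>x\<in>Poly_Mapping.keys a. \<Sum>y\<in>Poly_Mapping.keys b.
       Poly_Mapping.single (mpt_comp0 x y) (Poly_Mapping.lookup a x * Poly_Mapping.lookup b y))"

definition fscale :: "'k::field \<Rightarrow> ('a \<Rightarrow>\<^sub>0 'k) \<Rightarrow> ('a \<Rightarrow>\<^sub>0 'k)" where
  "fscale c f = Poly_Mapping.map (\<lambda>x. c * x) f"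

definition mpt_commutators :: "(mpt \<Rightarrow>\<^sub>0 'k::field) set" where
  "mpt_commutators = module.span fscale {mpt_comp a b - mpt_comp b a | a b. True}"

text \<open>A (concrete) planar aroma graph: a finite nonempty vertex set V (vertex names drawn
  from the countably infinite type nat list) and for each vertex the ordered list of targets
  of its outgoing edges.\<close>
type_synonym pgraph = "nat list set \<times> (nat list \<Rightarrow> nat list list)"

definition pg_edges :: "pgraph \<Rightarrow> (nat list \<times> nat list) set" where
  "pg_edges G = {(x, y). x \<in> fst G \<and> y \<in> set (snd G x)}"

definition raw_aroma :: "pgraph \<Rightarrow> bool" where
  "raw_aroma G \<longleftrightarrow> (case G of (V, ch) \<Rightarrow>
      finite V \<and> V \<noteq> {}
    \<and> (\<forall>x\<in>V. set (ch x) \<subseteq> V)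
    \<and> (\<forall>x. x \<notin> V \<longrightarrow> ch x = [])
    \<and> (\<forall>y\<in>V. (\<Sum>x\<in>V. count_list (ch x) y) = 1)
    \<and> (\<forall>x\<in>V. \<forall>y\<in>V. (x, y) \<in> (pg_edges G \<union> (pg_edges G)\<inverse>)\<^sup>*))"

definition pg_iso :: "pgraph \<Rightarrow> pgraph \<Rightarrow> bool" where
  "pg_iso G H \<longleftrightarrow> (\<exists>f. bij_betw f (fst G) (fst H) \<and>
      (\<forall>x\<in>fst G. snd H (f x) = map f (snd G x)))"

definition aroma_class :: "pgraph \<Rightarrow> pgraph set" where
  "aroma_class G = {H. raw_aroma H \<and> pg_iso G H}"

definition loop_graph :: pgraph where
  "loop_graph = ({[]}, \<lambda>x. if x = [] then [[]] else [])"

typedef aroma = "{A. \<exists>G. raw_aroma G \<and> A = aroma_class G}"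
  morphisms rep_aroma abs_aroma
proof
  have "raw_aroma loop_graph"
    unfolding raw_aroma_def loop_graph_def by auto
  then show "aroma_class loop_graph \<in> {A. \<exists>G. raw_aroma G \<and> A = aroma_class G}" by blast
qed

text \<open>The graph of a tree t with an extra edge from v to the root, inserted as the n-th
  outgoing edge of v. Vertices are the paths of t; the root is [].\<close>
definition tree_graph :: "nat list \<times> nat \<times> ptree \<Rightarrow> pgraph" where
  "tree_graph m = (case m of (v, n, t) \<Rightarrow>
     (vertices t, \<lambda>p. if p \<in> vertices t then
        (let cs = map (\<lambda>i. p @ [i]) [0..<arity t p] in
          if p = v then take (n - 1) cs @ [] # drop (n - 1) cs else cs)
      else []))"

definition tau0 :: "mpt \<Rightarrow> aroma" where
  "tau0 m = abs_aroma (aroma_class (tree_graph (rep_mpt m)))"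

definition tau :: "(mpt \<Rightarrow>\<^sub>0 'k::field) \<Rightarrow> (aroma \<Rightarrow>\<^sub>0 'k)" where
  "tau f = (\<Sum>x\<in>Poly_Mapping.keys f. Poly_Mapping.single (tau0 x) (Poly_Mapping.lookup f x))"

end

theory Submission
  imports Defs "HOL-Library.Sublist"
begin

text \<open>A planar aroma has exactly one cycle. Cutting it at an edge of the cycle leaves a planar tree
  marked where the cut edge started, so \<open>\<tau>\<close> is onto. For a product \<open>a \<circ> b\<close> the graph of
  \<open>\<tau> (a \<circ> b)\<close> is that of \<open>\<tau> (b \<circ> a)\<close> cut at a different cycle edge, so commutators lie in the
  kernel. Conversely, an isomorphism between the tree graphs of two marked trees sends the root
  to a cycle vertex of the target: if it is the root, both marked trees agree, otherwise cutting
  the target there exhibits the two as \<open>b \<circ> a\<close> and \<open>a \<circ> b\<close>. So basis elements with equal image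
  differ by a commutator, and the kernel of the linear extension \<open>\<tau>\<close> is spanned by such
  differences.\<close>

lemma count_list_distinct: "distinct xs \<Longrightarrow> count_list xs x = (if x \<in> set xs then 1 else 0)"
  by (induction xs) auto

lemma distinct_iff_count_list_le_1: "distinct xs \<longleftrightarrow> (\<forall>x. count_list xs x \<le> 1)"
proof (induction xs)
  case (Cons a xs)
  show ?case
  proof
    assume le: "\<forall>x. count_list (a # xs) x \<le> 1"
    then have "a \<notin> set xs"
      using le[rule_format, of a] by (simp add: count_list_0_iff)
    moreover have "count_list xs x \<le> 1" for x
      using le[rule_format, of x] by (simp split: if_splits)
    ultimately show "distinct (a # xs)"
      using Cons.IH by simp
  qed (auto simp: count_list_distinct)
qed simp

lemma set_insert_at: "set (take k xs @ a # drop k xs) = insert a (set xs)"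
proof -
  have "set xs = set (take k xs) \<union> set (drop k xs)"
    by (metis append_take_drop_id set_append)
  then show ?thesis
    by auto
qed

lemma distinct_insert_at: "distinct xs \<Longrightarrow> a \<notin> set xs \<Longrightarrow> distinct (take k xs @ a # drop k xs)"
proof -
  assume "distinct xs" "a \<notin> set xs"
  moreover have "distinct (take k xs @ drop k xs)"
    using \<open>distinct xs\<close> by simp
  ultimately show ?thesis
    by (auto simp del: append_take_drop_id dest: in_set_takeD in_set_dropD)
qed

lemma map_upt_Suc_split:
  assumes "k \<le> a"
  shows "map f [0..<Suc a] = map f [0..<k] @ f k # map (\<lambda>i. f (Suc i)) [k..<a]"
proof -
  have "[0..<Suc a] = [0..<k] @ [k..<Suc a]"
    using assms upt_add_eq_append[of 0 k "Suc a - k"] by simp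
  also have "[k..<Suc a] = k # map Suc [k..<a]"
    using assms by (simp add: upt_conv_Cons map_Suc_upt)
  finally show ?thesis
    by simp
qed

lemma filter_neq_nth_distinct:
  assumes "distinct xs" "j < length xs"
  shows "filter (\<lambda>c. c \<noteq> xs ! j) xs = take j xs @ drop (Suc j) xs"
proof -
  have xs: "xs = take j xs @ xs ! j # drop (Suc j) xs"
    using assms(2) by (rule id_take_nth_drop)
  have "distinct (take j xs @ xs ! j # drop (Suc j) xs)"
    by (metis assms(1) xs)
  then have "xs ! j \<notin> set (take j xs)" "xs ! j \<notin> set (drop (Suc j) xs)"
    by auto
  then have "filter (\<lambda>c. c \<noteq> xs ! j) (take j xs) = take j xs"
    "filter (\<lambda>c. c \<noteq> xs ! j) (drop (Suc j) xs) = drop (Suc j) xs"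
    by (auto intro!: filter_True)
  then have "filter (\<lambda>c. c \<noteq> xs ! j) (take j xs @ xs ! j # drop (Suc j) xs) = take j xs @ drop (Suc j) xs"
    by simp
  then show ?thesis
    by (simp only: xs[symmetric])
qed

lemma insert_at_filter_neq_nth_distinct:
  assumes "distinct xs" "j < length xs"
  defines "ys \<equiv> filter (\<lambda>c. c \<noteq> xs ! j) xs"
  shows "xs = take j ys @ xs ! j # drop j ys" and "length xs = Suc (length ys)"
  using id_take_nth_drop[OF assms(2)] assms(2)
  by (simp_all add: ys_def filter_neq_nth_distinct[OF assms(1,2)] min_def)

lemma subtree_append:
  "subtree t (p @ q) = (case subtree t p of None \<Rightarrow> None | Some s \<Rightarrow> subtree s q)"
  by (induction t p rule: subtree.induct) auto

lemma Nil_in_vertices [simp]: "[] \<in> vertices t"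
  by (simp add: vertices_def)

lemma Cons_in_vertices_Node [simp]:
  "i # p \<in> vertices (Node ts) \<longleftrightarrow> i < length ts \<and> p \<in> vertices (ts ! i)"
  by (simp add: vertices_def)

lemma vertices_prefix_closed: "p @ q \<in> vertices t \<Longrightarrow> p \<in> vertices t"
  by (auto simp: vertices_def subtree_append split: option.splits)

lemma snoc_in_vertices: "p @ [i] \<in> vertices t \<longleftrightarrow> p \<in> vertices t \<and> i < arity t p"
proof -
  have "subtree s [i] = (if i < length (children s) then Some (children s ! i) else None)" for s
    by (cases s) simp
  then show ?thesis
    by (cases "subtree t p") (auto simp: vertices_def arity_def subtree_append)
qed

lemma arity_Node_Nil: "arity (Node ts) [] = length ts"
  by (simp add: arity_def)

lemma arity_Node_Cons: "i < length ts \<Longrightarrow> arity (Node ts) (i # p) = arity (ts ! i) p"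
  by (simp add: arity_def)

lemma finite_vertices: "finite (vertices t)"
proof (induction t)
  case (Node ts)
  have "vertices (Node ts) \<subseteq> insert [] (\<Union>i<length ts. (#) i ` vertices (ts ! i))"
  proof
    fix p assume "p \<in> vertices (Node ts)"
    then show "p \<in> insert [] (\<Union>i<length ts. (#) i ` vertices (ts ! i))"
      by (cases p) auto
  qed
  moreover have "finite (\<Union>i<length ts. (#) i ` vertices (ts ! i))"
    using Node by auto
  ultimately show ?case
    by (meson finite_insert finite_subset)
qed

lemma vertices_inject: "vertices t = vertices t' \<Longrightarrow> t = t'"
proof (induction t arbitrary: t')
  case (Node ts)
  obtain ts' where t': "t' = Node ts'"
    by (cases t')
  have "[i] \<in> vertices (Node ts) \<longleftrightarrow> [i] \<in> vertices (Node ts')" for i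
    using Node.prems t' by simp
  then have "i < length ts \<longleftrightarrow> i < length ts'" for i
    by simp
  then have len: "length ts = length ts'"
    by (meson linorder_neqE_nat less_irrefl)
  have "ts ! i = ts' ! i" if "i < length ts" for i
  proof (rule Node.IH[OF nth_mem[OF that]])
    show "vertices (ts ! i) = vertices (ts' ! i)"
      using Node.prems t' that len by (metis Cons_in_vertices_Node subsetI subset_antisym)
  qed
  with t' len show ?case
    by (simp add: list_eq_iff_nth_eq)
qed

section \<open>Grafting\<close>

text \<open>The vertex of \<^term>\<open>graft s v n t\<close> that corresponds to the vertex \<open>p\<close> of \<open>t\<close>: the
  children of \<open>v\<close> from position \<open>n - 1\<close> on are shifted by one.\<close>

fun lift_vertex :: "nat list \<Rightarrow> nat \<Rightarrow> nat list \<Rightarrow> nat list" where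
  "lift_vertex [] n [] = []"
| "lift_vertex [] n (i # p) = (if n - 1 \<le> i then Suc i else i) # p"
| "lift_vertex (j # v) n [] = []"
| "lift_vertex (j # v) n (i # p) = i # (if i = j then lift_vertex v n p else p)"

lemma lift_vertex_Nil [simp]: "lift_vertex v n [] = []"
  by (cases v) auto

lemma inj_lift_vertex: "inj (lift_vertex v n)"
proof (rule injI)
  show "lift_vertex v n p = lift_vertex v n q \<Longrightarrow> p = q" for p q
  proof (induction v arbitrary: p q)
    case Nil
    then show ?case
      by (cases p; cases q) (simp_all split: if_splits)
  next
    case (Cons j v)
    show ?case
    proof (cases p)
      case Nil
      with Cons.prems show ?thesis by (cases q) simp_all
    next
      case (Cons i r)
      with Cons.prems Cons.IH[of r] show ?thesis
        by (cases q) (simp_all split: if_splits)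
    qed
  qed
qed

lemma lift_vertex_neq_grafted: "lift_vertex v n p \<noteq> v @ (n - 1) # q"
proof (induction v arbitrary: p)
  case Nil
  then show ?case by (cases p) simp_all
next
  case (Cons j v)
  then show ?case by (cases p) simp_all
qed

lemma lift_vertex_self [simp]: "lift_vertex v n v = v"
  by (induction v) auto

lemma lift_vertex_snoc:
  "lift_vertex v n (p @ [i]) =
     (if p = v then v @ [if n - 1 \<le> i then Suc i else i] else lift_vertex v n p @ [i])"
proof (induction v arbitrary: p)
  case Nil
  then show ?case by (cases p) simp_all
next
  case (Cons j v)
  then show ?case by (cases p) simp_all
qed

lemma subtree_graft_grafted:
  "v \<in> vertices t \<Longrightarrow> n \<le> arity t v + 1 \<Longrightarrow>
   subtree (graft s v n t) (v @ (n - 1) # q) = subtree s q"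
proof (induction v arbitrary: t)
  case Nil
  then obtain ts where "t = Node ts" "n - 1 \<le> length ts"
    by (cases t) (simp add: arity_Node_Nil)
  then show ?case
    by (simp add: nth_append)
next
  case (Cons j v)
  then obtain ts where "t = Node ts" "j < length ts"
    by (cases t) simp
  with Cons show ?case
    by (simp add: arity_Node_Cons)
qed

lemma subtree_graft_lift:
  "v \<in> vertices t \<Longrightarrow> n \<le> arity t v + 1 \<Longrightarrow> p \<in> vertices t \<Longrightarrow>
   subtree (graft s v n t) (lift_vertex v n p) =
     Some (if prefix p v then graft s (drop (length p) v) n (the (subtree t p)) else the (subtree t p))"
proof (induction v arbitrary: t p)
  case Nil
  then obtain ts where t: "t = Node ts" and le: "n - 1 \<le> length ts"
    by (cases t) (simp add: arity_Node_Nil)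
  show ?case
  proof (cases p)
    case (Cons i r)
    with Nil.prems t have "i < length ts" "r \<in> vertices (ts ! i)"
      by simp_all
    then have i: "i < length ts" "subtree (ts ! i) r \<noteq> None"
      by (simp_all add: vertices_def)
    define L where "L = take (n - 1) ts @ s # drop (n - 1) ts"
    define i' where "i' = (if n - 1 \<le> i then Suc i else i)"
    have "i' < length L" "L ! i' = ts ! i"
      using i le by (auto simp: i'_def L_def nth_append min_def)
    moreover have "graft s [] n t = Node L" "lift_vertex [] n p = i' # r"
      using t Cons by (simp_all add: L_def i'_def)
    ultimately show ?thesis
      using Cons i t by (simp del: graft.simps lift_vertex.simps)
  qed (simp add: t)
next
  case (Cons j v)
  then obtain ts where t: "t = Node ts" and j: "j < length ts"
    by (cases t) simp
  with Cons.prems have IH: "v \<in> vertices (ts ! j)" "n \<le> arity (ts ! j) v + 1"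
    by (simp_all add: arity_Node_Cons)
  show ?case
  proof (cases p)
    case (Cons i r)
    with Cons.prems t have "i < length ts" "r \<in> vertices (ts ! i)"
      by simp_all
    then have "i < length ts" "subtree (ts ! i) r \<noteq> None"
      by (simp_all add: vertices_def)
    then show ?thesis
      using Cons t j Cons.IH[OF IH, of r] Cons.prems(3) by auto
  qed (simp add: t)
qed

lemma vertices_graft_root_subset:
  assumes "n \<le> arity t [] + 1"
  shows "vertices (graft s [] n t) \<subseteq> lift_vertex [] n ` vertices t \<union> (#) (n - 1) ` vertices s"
proof
  obtain ts where t: "t = Node ts" and le: "n - 1 \<le> length ts"
    using assms by (cases t) (simp add: arity_Node_Nil)
  define L where "L = take (n - 1) ts @ s # drop (n - 1) ts"
  have children: "i # q \<in> lift_vertex [] n ` vertices t \<union> (#) (n - 1) ` vertices s"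
    if "i < length L" "q \<in> vertices (L ! i)" for i q
  proof -
    consider "i < n - 1" | "i = n - 1" | "n - 1 < i"
      by linarith
    then show ?thesis
    proof cases
      case 1
      then have "i # q \<in> vertices t" "lift_vertex [] n (i # q) = i # q"
        using that le t by (auto simp: L_def nth_append)
      then show ?thesis by (metis UnI1 imageI)
    next
      case 2
      then show ?thesis
        using that le by (auto simp: L_def nth_append)
    next
      case 3
      then have "(i - 1) # q \<in> vertices t" "lift_vertex [] n ((i - 1) # q) = i # q"
        using that le t by (auto simp: L_def nth_append min_def split: if_splits)
      then show ?thesis by (metis UnI1 imageI)
    qed
  qed
  fix p assume p: "p \<in> vertices (graft s [] n t)"
  show "p \<in> lift_vertex [] n ` vertices t \<union> (#) (n - 1) ` vertices s"
  proof (cases p)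
    case Nil
    then show ?thesis by (metis UnI1 image_eqI lift_vertex_Nil Nil_in_vertices)
  next
    case (Cons i q)
    then show ?thesis
      using p children[of i q] t by (simp add: L_def)
  qed
qed

lemma vertices_graft_subset:
  assumes "v \<in> vertices t" "n \<le> arity t v + 1"
  shows "vertices (graft s v n t) \<subseteq> lift_vertex v n ` vertices t \<union> (\<lambda>q. v @ (n - 1) # q) ` vertices s"
  using assms
proof (induction v arbitrary: t)
  case Nil
  then show ?case
    using vertices_graft_root_subset by simp
next
  case (Cons j v)
  then obtain ts where t: "t = Node ts" and j: "j < length ts"
    by (cases t) simp
  with Cons.prems have IH: "vertices (graft s v n (ts ! j)) \<subseteq>
      lift_vertex v n ` vertices (ts ! j) \<union> (\<lambda>q. v @ (n - 1) # q) ` vertices s"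
    by (intro Cons.IH) (simp_all add: arity_Node_Cons)
  show ?case
  proof
    fix p assume p: "p \<in> vertices (graft s (j # v) n t)"
    show "p \<in> lift_vertex (j # v) n ` vertices t \<union> (\<lambda>q. (j # v) @ (n - 1) # q) ` vertices s"
    proof (cases p)
      case Nil
      then show ?thesis by (metis UnI1 image_eqI lift_vertex_Nil Nil_in_vertices)
    next
      case (Cons i r)
      show ?thesis
      proof (cases "i = j")
        case True
        with p Cons t j have "r \<in> vertices (graft s v n (ts ! j))"
          by simp
        with IH show ?thesis
        proof (elim subsetD[THEN UnE])
          assume "r \<in> lift_vertex v n ` vertices (ts ! j)"
          then obtain r' where "r' \<in> vertices (ts ! j)" "r = lift_vertex v n r'"
            by blast
          then have "j # r' \<in> vertices t" "lift_vertex (j # v) n (j # r') = p"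
            using t j Cons True by auto
          then show ?thesis by (metis UnI1 imageI)
        qed (use Cons True in auto)
      next
        case False
        with p Cons t j have "i # r \<in> vertices t" "lift_vertex (j # v) n (i # r) = p"
          by auto
        then show ?thesis by (metis UnI1 imageI)
      qed
    qed
  qed
qed

lemma vertices_graft:
  assumes "v \<in> vertices t" "n \<le> arity t v + 1"
  shows "vertices (graft s v n t) = lift_vertex v n ` vertices t \<union> (\<lambda>q. v @ (n - 1) # q) ` vertices s"
proof
  show "lift_vertex v n ` vertices t \<union> (\<lambda>q. v @ (n - 1) # q) ` vertices s \<subseteq> vertices (graft s v n t)"
    using subtree_graft_lift[OF assms] subtree_graft_grafted[OF assms] by (auto simp: vertices_def)
qed (rule vertices_graft_subset[OF assms])

lemma arity_graft_lift:
  assumes "v \<in> vertices t" "n \<le> arity t v + 1" "p \<in> vertices t"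
  shows "arity (graft s v n t) (lift_vertex v n p) = arity t p + (if p = v then 1 else 0)"
proof -
  have len_Nil: "length (children (graft s [] n u)) = Suc (length (children u))" for u
    by (cases u) simp
  have len_Cons: "length (children (graft s (j # w) n u)) = length (children u)" for j w u
    by (cases u) simp
  show ?thesis
  proof (cases "prefix p v \<and> p \<noteq> v")
    case True
    then obtain j w where "drop (length p) v = j # w"
      by (metis append_eq_conv_conj prefix_def self_append_conv neq_Nil_conv)
    then show ?thesis
      using True subtree_graft_lift[OF assms, of s] by (simp add: arity_def len_Cons)
  next
    case False
    then show ?thesis
      using subtree_graft_lift[OF assms, of s] by (auto simp: arity_def len_Nil)
  qed
qed

lemma arity_graft_grafted:
  assumes "v \<in> vertices t" "n \<le> arity t v + 1"
  shows "arity (graft s v n t) (v @ (n - 1) # q) = arity s q"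
  using subtree_graft_grafted[OF assms] by (simp add: arity_def)

fun marked_comp :: "nat list \<times> nat \<times> ptree \<Rightarrow> nat list \<times> nat \<times> ptree \<Rightarrow> nat list \<times> nat \<times> ptree" where
  "marked_comp (v1, n1, t1) (v2, n2, t2) = (v1 @ (n1 - 1) # v2, n2, graft t2 v1 n1 t1)"

lemma marked_comp_marked:
  assumes "(v1, n1, t1) \<in> marked" "(v2, n2, t2) \<in> marked"
  shows "marked_comp (v1, n1, t1) (v2, n2, t2) \<in> marked"
  using assms subtree_graft_grafted[of v1 t1 n1 t2] arity_graft_grafted[of v1 t1 n1 t2]
  by (auto simp: marked_def vertices_def)

lemma rep_mpt_comp0: "rep_mpt (mpt_comp0 a b) = marked_comp (rep_mpt a) (rep_mpt b)"
  using rep_mpt[of a] rep_mpt[of b] marked_comp_marked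
  by (auto simp: mpt_comp0_def abs_mpt_inverse split: prod.splits)

definition tree_children :: "nat list \<Rightarrow> nat \<Rightarrow> ptree \<Rightarrow> nat list \<Rightarrow> nat list list" where
  "tree_children v n t p = (let cs = map (\<lambda>i. p @ [i]) [0..<arity t p] in
     if p = v then take (n - 1) cs @ [] # drop (n - 1) cs else cs)"

lemma fst_tree_graph [simp]: "fst (tree_graph (v, n, t)) = vertices t"
  by (simp add: tree_graph_def)

lemma snd_tree_graph:
  "snd (tree_graph (v, n, t)) p = (if p \<in> vertices t then tree_children v n t p else [])"
  by (simp add: tree_graph_def tree_children_def)

lemma set_tree_children:
  "set (tree_children v n t p) = (if p = v then {[]} else {}) \<union> {p @ [i] |i. i < arity t p}"
  by (auto simp: tree_children_def Let_def set_insert_at simp del: set_append)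

lemma mem_tree_children:
  "q \<in> set (tree_children v n t p) \<longleftrightarrow> (q = [] \<and> p = v) \<or> (\<exists>i < arity t p. q = p @ [i])"
  by (auto simp: set_tree_children)

lemma tree_children_subset_vertices:
  "p \<in> vertices t \<Longrightarrow> set (tree_children v n t p) \<subseteq> vertices t"
  by (auto simp: mem_tree_children snoc_in_vertices)

lemma filter_tree_children:
  "filter (\<lambda>c. c \<noteq> []) (tree_children v n t p) = map (\<lambda>i. p @ [i]) [0..<arity t p]"
proof -
  define cs where "cs = map (\<lambda>i. p @ [i]) [0..<arity t p]"
  have "filter (\<lambda>c. c \<noteq> []) cs = cs" "filter (\<lambda>c. c \<noteq> []) (take k cs) = take k cs"
    "filter (\<lambda>c. c \<noteq> []) (drop k cs) = drop k cs" for k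
    by (auto simp: cs_def intro!: filter_True dest: in_set_takeD in_set_dropD)
  then show ?thesis
    unfolding tree_children_def Let_def cs_def[symmetric] by simp
qed

lemma distinct_tree_children: "distinct (tree_children v n t p)"
proof -
  define cs where "cs = map (\<lambda>i. p @ [i]) [0..<arity t p]"
  have "distinct cs" "[] \<notin> set cs"
    by (auto simp: cs_def distinct_map inj_on_def)
  then show ?thesis
    unfolding tree_children_def Let_def cs_def[symmetric]
    by (simp add: distinct_insert_at del: distinct_append)
qed

lemma tree_graph_edge_iff:
  "(p, q) \<in> pg_edges (tree_graph (v, n, t)) \<longleftrightarrow>
     p \<in> vertices t \<and> ((q = [] \<and> p = v) \<or> (\<exists>i < arity t p. q = p @ [i]))"
  by (auto simp: pg_edges_def snd_tree_graph mem_tree_children)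

lemma tree_graph_path_from_root:
  "p \<in> vertices t \<Longrightarrow> ([], p) \<in> (pg_edges (tree_graph (v, n, t)))\<^sup>*"
proof (induction p rule: rev_induct)
  case (snoc i p)
  then have "p \<in> vertices t" "(p, p @ [i]) \<in> pg_edges (tree_graph (v, n, t))"
    by (simp_all add: snoc_in_vertices tree_graph_edge_iff)
  with snoc.IH show ?case
    using rtrancl_into_rtrancl by metis
qed simp

lemma tree_graph_root_on_cycle:
  assumes "v \<in> vertices t"
  shows "([], []) \<in> (pg_edges (tree_graph (v, n, t)))\<^sup>+"
proof -
  have "(v, []) \<in> pg_edges (tree_graph (v, n, t))"
    using assms by (simp add: tree_graph_edge_iff)
  with tree_graph_path_from_root[OF assms] show ?thesis
    by (rule rtrancl_into_trancl1)
qed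

text \<open>The only cycle of a tree graph runs from the root to the marked vertex \<open>v\<close> and back.\<close>

lemma tree_graph_trancl_prefix:
  "(p, q) \<in> (pg_edges (tree_graph (v, n, t)))\<^sup>+ \<Longrightarrow> strict_prefix p q \<or> prefix p v"
proof (induction rule: trancl_induct)
  case (step q r)
  from step.hyps(2) consider "r = []" "q = v" | i where "r = q @ [i]"
    by (auto simp: tree_graph_edge_iff)
  then show ?case
  proof cases
    case 2
    then have "strict_prefix q r"
      by (simp add: strict_prefix_def)
    with step.IH show ?thesis
      using prefix_order.less_trans by blast
  qed (use step.IH in \<open>auto simp: strict_prefix_def\<close>)
qed (auto simp: tree_graph_edge_iff strict_prefix_def)

lemma tree_graph_indegree:
  assumes v: "v \<in> vertices t" and q: "q \<in> vertices t"
  shows "(\<Sum>p\<in>vertices t. count_list (tree_children v n t p) q) = 1"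
proof -
  obtain z where z: "z \<in> vertices t" "\<And>p. q \<in> set (tree_children v n t p) \<longleftrightarrow> p = z"
  proof (cases q rule: rev_cases)
    case Nil
    then show ?thesis using that[of v] v by (auto simp: mem_tree_children)
  next
    case (snoc z i)
    then show ?thesis using that[of z] q by (auto simp: mem_tree_children snoc_in_vertices)
  qed
  have "count_list (tree_children v n t p) q = (if p = z then 1 else 0)" for p
    using z(2)[of p] distinct_tree_children[of v n t p] by (simp add: count_list_distinct)
  then show ?thesis
    using z(1) finite_vertices by simp
qed

lemma tree_graph_connected:
  assumes "p \<in> vertices t" "q \<in> vertices t"
  shows "(p, q) \<in> (pg_edges (tree_graph (v, n, t)) \<union> (pg_edges (tree_graph (v, n, t)))\<inverse>)\<^sup>*"
proof -
  let ?E = "pg_edges (tree_graph (v, n, t))"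
  have "(p, []) \<in> (?E \<union> ?E\<inverse>)\<^sup>*"
    using rtrancl_converseI[OF tree_graph_path_from_root[OF assms(1)]] rtrancl_mono[of "?E\<inverse>" "?E \<union> ?E\<inverse>"]
    by (auto simp: rtrancl_converse)
  moreover have "([], q) \<in> (?E \<union> ?E\<inverse>)\<^sup>*"
    using tree_graph_path_from_root[OF assms(2)] rtrancl_mono[of ?E "?E \<union> ?E\<inverse>"] by auto
  ultimately show ?thesis
    by (rule rtrancl_trans)
qed

lemma raw_aroma_tree_graph:
  assumes "(v, n, t) \<in> marked"
  shows "raw_aroma (tree_graph (v, n, t))"
proof -
  have G: "tree_graph (v, n, t) = (vertices t, \<lambda>p. if p \<in> vertices t then tree_children v n t p else [])"
    by (simp add: prod_eq_iff fun_eq_iff snd_tree_graph)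
  have v: "v \<in> vertices t"
    using assms by (simp add: marked_def)
  show ?thesis
    unfolding raw_aroma_def G prod.case
  proof (intro conjI ballI allI impI)
    show "finite (vertices t)" "vertices t \<noteq> {}"
      using finite_vertices Nil_in_vertices[of t] by blast+
  qed (use tree_graph_indegree[OF v] tree_graph_connected[of _ t _ v n, unfolded G]
      tree_children_subset_vertices in auto)
qed

definition pg_iso_map :: "(nat list \<Rightarrow> nat list) \<Rightarrow> pgraph \<Rightarrow> pgraph \<Rightarrow> bool" where
  "pg_iso_map f G H \<longleftrightarrow> bij_betw f (fst G) (fst H) \<and> (\<forall>x\<in>fst G. snd H (f x) = map f (snd G x))"

lemma pg_iso_iff_ex_map: "pg_iso G H \<longleftrightarrow> (\<exists>f. pg_iso_map f G H)"
  by (simp add: pg_iso_def pg_iso_map_def)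

lemma pg_iso_map_id: "pg_iso_map id G G"
  by (simp add: pg_iso_map_def)

lemma pg_iso_map_comp: "pg_iso_map f G H \<Longrightarrow> pg_iso_map g H K \<Longrightarrow> pg_iso_map (g \<circ> f) G K"
  unfolding pg_iso_map_def by (auto intro: bij_betw_trans dest: bij_betwE)

lemma pg_iso_map_inv:
  assumes f: "pg_iso_map f G H" and closed: "\<forall>x\<in>fst G. set (snd G x) \<subseteq> fst G"
  shows "pg_iso_map (the_inv_into (fst G) f) H G"
proof -
  have bij: "bij_betw f (fst G) (fst H)"
    using f by (simp add: pg_iso_map_def)
  then have inj: "inj_on f (fst G)"
    by (simp add: bij_betw_def)
  have "snd G (the_inv_into (fst G) f (f x)) = map (the_inv_into (fst G) f) (snd H (f x))"
    if x: "x \<in> fst G" for x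
  proof -
    have "map (the_inv_into (fst G) f) (snd H (f x)) = map (the_inv_into (fst G) f \<circ> f) (snd G x)"
      using f x by (simp add: pg_iso_map_def)
    also have "\<dots> = snd G x"
      using closed x inj by (intro map_idI) (auto intro: the_inv_into_f_f)
    finally show ?thesis
      using x inj by (simp add: the_inv_into_f_f)
  qed
  moreover have "fst H = f ` fst G"
    using bij by (simp add: bij_betw_def)
  ultimately show ?thesis
    using bij_betw_the_inv_into[OF bij] by (auto simp: pg_iso_map_def)
qed

lemma pg_iso_map_trancl:
  assumes "pg_iso_map f G H" "(x, y) \<in> (pg_edges G)\<^sup>+"
  shows "(f x, f y) \<in> (pg_edges H)\<^sup>+"
proof -
  have "(f x, f y) \<in> pg_edges H" if "(x, y) \<in> pg_edges G" for x y
    using assms(1) that by (auto simp: pg_iso_map_def pg_edges_def dest: bij_betwE)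
  with assms(2) show ?thesis
    by (induction rule: trancl_induct) (auto intro: trancl_into_trancl)
qed

lemma aroma_class_eq_if_iso:
  assumes "pg_iso_map f G H" "\<forall>x\<in>fst G. set (snd G x) \<subseteq> fst G"
  shows "aroma_class G = aroma_class H"
  using pg_iso_map_comp[OF assms(1)] pg_iso_map_comp[OF pg_iso_map_inv[OF assms]]
  unfolding aroma_class_def pg_iso_iff_ex_map by blast

lemma tree_graph_closed: "\<forall>x\<in>fst (tree_graph (v, n, t)). set (snd (tree_graph (v, n, t)) x) \<subseteq> fst (tree_graph (v, n, t))"
  by (simp add: snd_tree_graph tree_children_subset_vertices)

section \<open>Swapping the factors of a product\<close>

lemma tree_children_graft_lift:
  assumes "v1 \<in> vertices t1" "1 \<le> n1" "n1 \<le> arity t1 v1 + 1" "p \<in> vertices t1"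
  shows "tree_children (v1 @ (n1 - 1) # v2) n2 (graft t2 v1 n1 t1) (lift_vertex v1 n1 p) =
     map (\<lambda>c. if c = [] then v1 @ [n1 - 1] else lift_vertex v1 n1 c) (tree_children v1 n1 t1 p)"
proof -
  have not_marked: "lift_vertex v1 n1 p \<noteq> v1 @ (n1 - 1) # v2"
    by (rule lift_vertex_neq_grafted)
  note arity = arity_graft_lift[OF assms(1,3,4), of t2]
  show ?thesis
  proof (cases "p = v1")
    case True
    have k: "n1 - 1 \<le> arity t1 v1"
      using assms by simp
    have "map (\<lambda>i. v1 @ [if n1 - 1 \<le> i then Suc i else i]) [0..<n1 - 1] = map (\<lambda>i. v1 @ [i]) [0..<n1 - 1]"
      "map (\<lambda>i. v1 @ [if n1 - 1 \<le> i then Suc i else i]) [n1 - 1..<arity t1 v1] =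
         map (\<lambda>i. v1 @ [Suc i]) [n1 - 1..<arity t1 v1]"
      by (auto intro: map_cong)
    with True not_marked arity k map_upt_Suc_split[OF k, of "\<lambda>i. v1 @ [i]"] show ?thesis
      by (simp add: tree_children_def lift_vertex_snoc take_map drop_map)
  qed (use not_marked arity in \<open>simp add: tree_children_def lift_vertex_snoc\<close>)
qed

lemma tree_children_graft_grafted:
  assumes "v1 \<in> vertices t1" "n1 \<le> arity t1 v1 + 1"
  shows "tree_children (v1 @ (n1 - 1) # v2) n2 (graft t2 v1 n1 t1) (v1 @ (n1 - 1) # q) =
     map (\<lambda>c. if c = [] then [] else v1 @ (n1 - 1) # c) (tree_children v2 n2 t2 q)"
  using arity_graft_grafted[OF assms, of t2 q]
  by (simp add: tree_children_def take_map drop_map Let_def)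

text \<open>The tree graphs of \<open>b \<circ> a\<close> and \<open>a \<circ> b\<close> are the same aroma, cut at different edges of
  its cycle. The isomorphism \<^term>\<open>reroot v n v' n'\<close> moves the subtree grafted at \<open>v\<close> back to the
  root and grafts the remaining tree at \<open>v'\<close>.\<close>

definition reroot :: "nat list \<Rightarrow> nat \<Rightarrow> nat list \<Rightarrow> nat \<Rightarrow> nat list \<Rightarrow> nat list" where
  "reroot v n v' n' x = (if x \<in> range (lift_vertex v n) then v' @ (n' - 1) # inv (lift_vertex v n) x
     else lift_vertex v' n' (drop (Suc (length v)) x))"

lemma reroot_lift [simp]: "reroot v n v' n' (lift_vertex v n q) = v' @ (n' - 1) # q"
  by (simp add: reroot_def inv_f_f[OF inj_lift_vertex])

lemma reroot_grafted: "reroot v n v' n' (v @ (n - 1) # p) = lift_vertex v' n' p"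
proof -
  have "v @ (n - 1) # p \<notin> range (lift_vertex v n)"
    using lift_vertex_neq_grafted by (metis rangeE)
  then show ?thesis
    by (simp add: reroot_def)
qed

context
  fixes v1 n1 t1 v2 n2 t2
  assumes a: "(v1, n1, t1) \<in> marked" and b: "(v2, n2, t2) \<in> marked"
begin

private lemma marked_components:
  "v1 \<in> vertices t1" "1 \<le> n1" "n1 \<le> arity t1 v1 + 1"
  "v2 \<in> vertices t2" "1 \<le> n2" "n2 \<le> arity t2 v2 + 1"
  using a b by (auto simp: marked_def)

private lemma vertices_graft_21:
  "vertices (graft t1 v2 n2 t2) = lift_vertex v2 n2 ` vertices t2 \<union> (\<lambda>p. v2 @ (n2 - 1) # p) ` vertices t1"
  using vertices_graft marked_components by simp

lemma bij_betw_reroot: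
  "bij_betw (reroot v2 n2 v1 n1) (vertices (graft t1 v2 n2 t2)) (vertices (graft t2 v1 n1 t1))"
  using vertices_graft marked_components
  by (intro bij_betw_byWitness[where f' = "reroot v1 n1 v2 n2"]) (auto simp: reroot_grafted[simplified])

lemma tree_children_reroot:
  assumes "x \<in> vertices (graft t1 v2 n2 t2)"
  shows "tree_children (v1 @ (n1 - 1) # v2) n2 (graft t2 v1 n1 t1) (reroot v2 n2 v1 n1 x) =
    map (reroot v2 n2 v1 n1) (tree_children (v2 @ (n2 - 1) # v1) n1 (graft t1 v2 n2 t2) x)"
proof -
  note A = marked_components(1-3) and B = marked_components(4-6)
  from assms consider q where "q \<in> vertices t2" "x = lift_vertex v2 n2 q"
    | p where "p \<in> vertices t1" "x = v2 @ (n2 - 1) # p"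
    unfolding vertices_graft_21 by blast
  then show ?thesis
  proof cases
    case 1
    have "map (reroot v2 n2 v1 n1) (tree_children (v2 @ (n2 - 1) # v1) n1 (graft t1 v2 n2 t2) x) =
        map (reroot v2 n2 v1 n1)
          (map (\<lambda>c. if c = [] then v2 @ [n2 - 1] else lift_vertex v2 n2 c) (tree_children v2 n2 t2 q))"
      using tree_children_graft_lift[OF B 1(1), of v1 n1 t1] 1(2) by simp
    also have "\<dots> = map (\<lambda>c. if c = [] then [] else v1 @ (n1 - 1) # c) (tree_children v2 n2 t2 q)"
      using reroot_grafted[of v2 n2 v1 n1 "[]"] by (simp add: comp_def if_distrib)
    also have "\<dots> = tree_children (v1 @ (n1 - 1) # v2) n2 (graft t2 v1 n1 t1) (reroot v2 n2 v1 n1 x)"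
      using tree_children_graft_grafted[OF A(1,3), of v2 n2 t2 q] 1(2) by simp
    finally show ?thesis
      by simp
  next
    case 2
    have "map (reroot v2 n2 v1 n1) (tree_children (v2 @ (n2 - 1) # v1) n1 (graft t1 v2 n2 t2) x) =
        map (reroot v2 n2 v1 n1)
          (map (\<lambda>c. if c = [] then [] else v2 @ (n2 - 1) # c) (tree_children v1 n1 t1 p))"
      using tree_children_graft_grafted[OF B(1,3), of v1 n1 t1 p] 2(2) by simp
    also have "\<dots> = map (\<lambda>c. if c = [] then v1 @ [n1 - 1] else lift_vertex v1 n1 c) (tree_children v1 n1 t1 p)"
      using reroot_lift[of v2 n2 v1 n1 "[]"] reroot_grafted[of v2 n2 v1 n1]
      by (simp add: comp_def if_distrib)
    also have "\<dots> = tree_children (v1 @ (n1 - 1) # v2) n2 (graft t2 v1 n1 t1) (reroot v2 n2 v1 n1 x)"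
      using tree_children_graft_lift[OF A 2(1), of v2 n2 t2] 2(2) reroot_grafted[of v2 n2 v1 n1 p]
      by simp
    finally show ?thesis
      by simp
  qed
qed

lemma reroot_iso:
  "pg_iso_map (reroot v2 n2 v1 n1)
     (tree_graph (marked_comp (v2, n2, t2) (v1, n1, t1))) (tree_graph (marked_comp (v1, n1, t1) (v2, n2, t2)))"
  using bij_betw_reroot tree_children_reroot bij_betwE[OF bij_betw_reroot]
  by (auto simp: pg_iso_map_def snd_tree_graph)

end

lemma tree_graph_iso_fixing_root_is_id:
  assumes f: "pg_iso_map f (tree_graph (v, n, t)) (tree_graph (v', n', t'))" and root: "f [] = []"
    and p: "p \<in> vertices t"
  shows "f p = p"
  using p
proof (induction p rule: rev_induct)
  case (snoc i p)
  then have p: "p \<in> vertices t" "i < arity t p" and fp: "f p = p"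
    by (simp_all add: snoc_in_vertices)
  have bij: "bij_betw f (vertices t) (vertices t')"
    using f by (simp add: pg_iso_map_def)
  have "snd (tree_graph (v', n', t')) (f p) = map f (snd (tree_graph (v, n, t)) p)"
    using f p(1) by (simp add: pg_iso_map_def)
  moreover have "p \<in> vertices t'"
    using bij p(1) fp by (metis bij_betwE)
  ultimately have children: "tree_children v' n' t' p = map f (tree_children v n t p)"
    using p(1) fp by (simp add: snd_tree_graph)
  have "f c = [] \<longleftrightarrow> c = []" if "c \<in> vertices t" for c
    using that root bij by (metis Nil_in_vertices bij_betw_iff_bijections)
  then have "filter (\<lambda>c. f c \<noteq> []) (tree_children v n t p) = filter (\<lambda>c. c \<noteq> []) (tree_children v n t p)"
    using tree_children_subset_vertices[OF p(1), of v n] by (intro filter_cong) auto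
  then have "map (\<lambda>i. p @ [i]) [0..<arity t' p] = map (\<lambda>i. f (p @ [i])) [0..<arity t p]"
    using arg_cong[OF children, of "filter (\<lambda>c. c \<noteq> [])"]
    by (simp add: filter_map comp_def filter_tree_children)
  then show ?case
    using p(2) by (metis (no_types, lifting) length_map length_upt diff_zero nth_map nth_upt add_0)
qed (use root in simp)

lemma tree_graph_iso_rigid:
  assumes m: "(v, n, t) \<in> marked" and m': "(v', n', t') \<in> marked"
    and f: "pg_iso_map f (tree_graph (v, n, t)) (tree_graph (v', n', t'))" and root: "f [] = []"
  shows "(v', n', t') = (v, n, t)"
proof -
  note id = tree_graph_iso_fixing_root_is_id[OF f root]
  have bij: "bij_betw f (vertices t) (vertices t')"
    using f by (simp add: pg_iso_map_def)
  then have "vertices t' = vertices t"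
    using id by (metis bij_betw_imp_surj_on image_cong image_ident)
  then have t: "t' = t"
    by (rule vertices_inject)
  have children: "tree_children v' n' t p = tree_children v n t p" if "p \<in> vertices t" for p
    using f that id tree_children_subset_vertices[OF that, of v n] t bij_betwE[OF bij]
    by (auto simp: pg_iso_map_def snd_tree_graph intro!: map_idI)
  have v: "v \<in> vertices t" "1 \<le> n" "n \<le> arity t v + 1"
    and v': "v' \<in> vertices t" "1 \<le> n'" "n' \<le> arity t v' + 1"
    using m m' t by (auto simp: marked_def)
  then have "v' = v"
    using children[OF v(1)] mem_tree_children[of "[]" v' n' t v] mem_tree_children[of "[]" v n t v]
    by auto
  define cs where "cs = map (\<lambda>i. v @ [i]) [0..<arity t v]"
  have "take (n' - 1) cs @ [] # drop (n' - 1) cs = take (n - 1) cs @ [] # drop (n - 1) cs"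
    using children[OF v(1)] \<open>v' = v\<close> by (simp add: tree_children_def cs_def Let_def)
  moreover have "[] \<notin> set cs"
    by (auto simp: cs_def)
  ultimately have "take (n' - 1) cs = take (n - 1) cs"
    by (meson append_Cons_eq_iff in_set_dropD in_set_takeD)
  then have "n' - 1 = n - 1"
    using v v' \<open>v' = v\<close> by (metis cs_def length_map length_take length_upt min.absorb2 diff_zero le_diff_conv)
  with v v' \<open>v' = v\<close> t show ?thesis
    by simp
qed

text \<open>Removing the \<open>j\<close>-th subtree of the vertex \<open>w\<close> (0-based), the inverse of grafting it back.\<close>

function prune :: "ptree \<Rightarrow> nat list \<Rightarrow> nat \<Rightarrow> ptree" where
  "prune (Node ts) [] j = Node (take j ts @ drop (Suc j) ts)"
| "prune (Node ts) (i # w) j = (if i < length ts then Node (ts[i := prune (ts ! i) w j]) else Node ts)"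
  by pat_completeness auto
termination
  by (relation "measure (\<lambda>(t, w, j). size t)") (auto dest: size_nth_less)

lemma graft_prune:
  "w @ [j] \<in> vertices t \<Longrightarrow>
   graft (the (subtree t (w @ [j]))) w (Suc j) (prune t w j) = t \<and>
   w \<in> vertices (prune t w j) \<and> Suc (arity (prune t w j) w) = arity t w"
proof (induction w arbitrary: t)
  case Nil
  obtain ts where t: "t = Node ts" and j: "j < length ts"
    using Nil by (cases t) simp
  then show ?case
    using id_take_nth_drop[OF j] by (simp add: arity_Node_Nil min_def)
next
  case (Cons i w)
  obtain ts where t: "t = Node ts" and i: "i < length ts" "w @ [j] \<in> vertices (ts ! i)"
    using Cons.prems by (cases t) simp
  then show ?case
    using Cons.IH[OF i(2)] by (simp add: arity_Node_Cons)
qed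

lemma marked_decompose:
  assumes m: "(v, n, t) \<in> marked" and w: "prefix (w @ [j]) v"
  obtains t1 u s where "(w, Suc j, t1) \<in> marked" "(u, n, s) \<in> marked"
    "(v, n, t) = marked_comp (w, Suc j, t1) (u, n, s)"
proof -
  define s where "s = the (subtree t (w @ [j]))"
  define u where "u = drop (Suc (length w)) v"
  have v: "v \<in> vertices t" "1 \<le> n" "n \<le> arity t v + 1"
    using m by (auto simp: marked_def)
  have v_eq: "v = w @ j # u"
    using w by (auto simp: prefix_def u_def)
  have wj: "w @ [j] \<in> vertices t"
    using v(1) w vertices_prefix_closed by (auto simp: prefix_def)
  then have "subtree t (w @ [j]) = Some s"
    by (auto simp: vertices_def s_def)
  then have "subtree t v = subtree s u"
    using v_eq subtree_append[of t "w @ [j]" u] by simp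
  then have "(u, n, s) \<in> marked"
    using v by (auto simp: marked_def vertices_def arity_def)
  moreover have "(w, Suc j, prune t w j) \<in> marked"
    using graft_prune[OF wj] wj by (auto simp: marked_def snoc_in_vertices)
  moreover have "(v, n, t) = marked_comp (w, Suc j, prune t w j) (u, n, s)"
    using graft_prune[OF wj] v_eq by (simp add: s_def)
  ultimately show ?thesis
    using that by blast
qed

lemma tree_graph_iso_inv:
  "pg_iso_map f (tree_graph (v, n, t)) H \<Longrightarrow> pg_iso_map (the_inv_into (vertices t) f) H (tree_graph (v, n, t))"
  using pg_iso_map_inv[OF _ tree_graph_closed] by fastforce

lemma tree_graph_iso_root_prefix:
  assumes "v \<in> vertices t" "pg_iso_map f (tree_graph (v, n, t)) (tree_graph (v', n', t'))"
  shows "prefix (f []) v'"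
  using pg_iso_map_trancl[OF assms(2) tree_graph_root_on_cycle[OF assms(1)]] tree_graph_trancl_prefix
  by blast

text \<open>An isomorphism of tree graphs sends the root to a vertex \<open>w @ [j]\<close> on the cycle of the target. If
  that vertex is not the root, cutting the target at it decomposes it as a product, and rerooting
  reduces to an isomorphism fixing the root.\<close>

lemma tree_graph_iso_cases:
  assumes m: "m \<in> marked" and m': "m' \<in> marked" and f: "pg_iso_map f (tree_graph m) (tree_graph m')"
  shows "m' = m \<or> (\<exists>m1\<in>marked. \<exists>m2\<in>marked. m = marked_comp m2 m1 \<and> m' = marked_comp m1 m2)"
proof -
  obtain v n t v' n' t' where triples: "m = (v, n, t)" "m' = (v', n', t')"
    by (cases m, cases m') auto
  have f_root: "prefix (f []) v'"
    using tree_graph_iso_root_prefix m f triples by (auto simp: marked_def)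
  show ?thesis
  proof (cases "f [] = []")
    case True
    then show ?thesis
      using tree_graph_iso_rigid m m' f triples by metis
  next
    case False
    then obtain w j where wj: "f [] = w @ [j]"
      by (metis rev_exhaust)
    with f_root m' triples obtain t1 u s where m1: "(w, Suc j, t1) \<in> marked" and m2: "(u, n', s) \<in> marked"
      and m'_eq: "m' = marked_comp (w, Suc j, t1) (u, n', s)"
      by (metis marked_decompose)
    let ?g = "reroot u n' w (Suc j)"
    have g: "pg_iso_map ?g (tree_graph (marked_comp (u, n', s) (w, Suc j, t1))) (tree_graph m')"
      unfolding m'_eq by (rule reroot_iso[OF m1 m2])
    let ?h = "the_inv_into (vertices (graft t1 u n' s)) ?g"
    have "pg_iso_map (?h \<circ> f) (tree_graph m) (tree_graph (marked_comp (u, n', s) (w, Suc j, t1)))"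
      using pg_iso_map_comp[OF f tree_graph_iso_inv] g by simp
    moreover have "?h (f []) = []"
      using g wj reroot_lift[of u n' w "Suc j" "[]"] the_inv_into_f_f[of ?g _ "[]"]
      by (simp add: pg_iso_map_def bij_betw_def)
    ultimately have "marked_comp (u, n', s) (w, Suc j, t1) = m"
      using tree_graph_iso_rigid[of v n t] marked_comp_marked[OF m2 m1] m triples by simp
    then show ?thesis
      using m1 m2 m'_eq by blast
  qed
qed

section \<open>Every aroma is the aroma of a marked tree\<close>

locale aroma_graph =
  fixes V :: "nat list set" and ch :: "nat list \<Rightarrow> nat list list"
  assumes raw_aroma: "raw_aroma (V, ch)"
begin

lemma
  shows finite_V: "finite V"
  and V_nonempty: "V \<noteq> {}"
  and children_in_V: "x \<in> V \<Longrightarrow> set (ch x) \<subseteq> V"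
  and indegree: "y \<in> V \<Longrightarrow> (\<Sum>x\<in>V. count_list (ch x) y) = 1"
  and connected: "x \<in> V \<Longrightarrow> y \<in> V \<Longrightarrow> (x, y) \<in> (pg_edges (V, ch) \<union> (pg_edges (V, ch))\<inverse>)\<^sup>*"
  using raw_aroma unfolding raw_aroma_def by auto

lemma count_children_unique:
  assumes "y \<in> V" "x \<in> V" "y \<in> set (ch x)"
  shows "count_list (ch x) y = 1" and "\<And>z. z \<in> V \<Longrightarrow> z \<noteq> x \<Longrightarrow> y \<notin> set (ch z)"
proof -
  have "count_list (ch x) y + (\<Sum>z\<in>V - {x}. count_list (ch z) y) = 1"
    using indegree[OF assms(1)] sum.remove[OF finite_V assms(2), of "\<lambda>z. count_list (ch z) y"] by simp
  moreover have "count_list (ch x) y \<noteq> 0"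
    using assms(3) by (simp add: count_list_0_iff)
  ultimately have "count_list (ch x) y = 1" "(\<Sum>z\<in>V - {x}. count_list (ch z) y) = 0"
    by linarith+
  then show "count_list (ch x) y = 1" "\<And>z. z \<in> V \<Longrightarrow> z \<noteq> x \<Longrightarrow> y \<notin> set (ch z)"
    using finite_V by (simp_all add: count_list_0_iff)
qed

lemma distinct_children: "x \<in> V \<Longrightarrow> distinct (ch x)"
  using count_children_unique(1) children_in_V
  by (metis count_notin distinct_iff_count_list_le_1 le_numeral_extra(1,4) subsetD)

definition parent :: "nat list \<Rightarrow> nat list" where
  "parent y = (THE x. x \<in> V \<and> y \<in> set (ch x))"

lemma parent_eqI: "x \<in> V \<Longrightarrow> y \<in> set (ch x) \<Longrightarrow> parent y = x"
  unfolding parent_def using count_children_unique(2) children_in_V by blast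

lemma parent_in_V: "y \<in> V \<Longrightarrow> parent y \<in> V \<and> y \<in> set (ch (parent y))"
proof -
  assume y: "y \<in> V"
  have "\<exists>x\<in>V. y \<in> set (ch x)"
    using indegree[OF y] by (metis count_notin sum.neutral zero_neq_one)
  then show ?thesis
    using parent_eqI by auto
qed

lemma funpow_parent_in_V: "y \<in> V \<Longrightarrow> (parent ^^ k) y \<in> V"
  by (induction k) (simp_all add: parent_in_V)

text \<open>Pigeonhole on the iterated parents of any vertex.\<close>

lemma ex_vertex_on_cycle: "\<exists>r\<in>V. \<exists>k. (parent ^^ k) (parent r) = r"
proof -
  obtain y where y: "y \<in> V"
    using V_nonempty by blast
  have "(\<lambda>i. (parent ^^ i) y) ` {0..card V} \<subseteq> V"
    using funpow_parent_in_V[OF y] by auto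
  then have "\<not> inj_on (\<lambda>i. (parent ^^ i) y) {0..card V}"
    using card_inj_on_le[OF _ _ finite_V] by fastforce
  then obtain i j where ij: "i < j" "(parent ^^ i) y = (parent ^^ j) y"
    unfolding inj_on_def by (metis linorder_neqE_nat)
  have "(parent ^^ (j - i - 1)) (parent ((parent ^^ i) y)) = (parent ^^ (j - i - 1 + Suc i)) y"
    by (simp only: funpow_add comp_apply funpow.simps(2))
  also have "j - i - 1 + Suc i = j"
    using ij(1) by simp
  finally show ?thesis
    using ij(2) funpow_parent_in_V[OF y] by metis
qed

end

text \<open>Cutting the edge into a vertex \<open>r\<close> on the cycle turns the aroma into a tree rooted at \<open>r\<close>,
  marked at \<^term>\<open>parent r\<close>. Its vertices are the paths from \<open>r\<close> that avoid the cut edge.\<close>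

locale rooted_aroma_graph = aroma_graph +
  fixes r :: "nat list"
  assumes root_in_V: "r \<in> V" and root_on_cycle: "\<exists>k. (parent ^^ k) (parent r) = r"
begin

definition tree_ch :: "nat list \<Rightarrow> nat list list" where
  "tree_ch y = filter (\<lambda>c. c \<noteq> r) (ch y)"

fun walk :: "nat list \<Rightarrow> nat list \<Rightarrow> nat list option" where
  "walk y [] = Some y"
| "walk y (i # p) = (if i < length (tree_ch y) then walk (tree_ch y ! i) p else None)"

fun unfold_tree :: "nat \<Rightarrow> nat list \<Rightarrow> ptree" where
  "unfold_tree 0 y = Node []"
| "unfold_tree (Suc k) y = Node (map (unfold_tree k) (tree_ch y))"

definition paths :: "nat list set" where
  "paths = {p. walk r p \<noteq> None}"

definition endpoint :: "nat list \<Rightarrow> nat list" where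
  "endpoint p = the (walk r p)"

lemma walk_append: "walk y (p @ q) = (case walk y p of None \<Rightarrow> None | Some z \<Rightarrow> walk z q)"
  by (induction p arbitrary: y) auto

lemma subtree_unfold_tree:
  "subtree (unfold_tree k y) p =
     (if length p \<le> k then map_option (unfold_tree (k - length p)) (walk y p) else None)"
proof (induction p arbitrary: k y)
  case (Cons i p)
  then show ?case
    by (cases k) simp_all
qed simp

lemma walk_in_V: "y \<in> V \<Longrightarrow> walk y p = Some z \<Longrightarrow> z \<in> V"
proof (induction p arbitrary: y)
  case (Cons i p)
  then have i: "i < length (tree_ch y)" and "walk (tree_ch y ! i) p = Some z"
    by (simp_all split: if_splits)
  moreover have "tree_ch y ! i \<in> V"
    using nth_mem[OF i] children_in_V[OF Cons.prems(1)] by (auto simp: tree_ch_def)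
  ultimately show ?case
    using Cons.IH by blast
qed simp

lemma Nil_in_paths: "[] \<in> paths" and endpoint_Nil: "endpoint [] = r"
  by (simp_all add: paths_def endpoint_def)

lemma endpoint_in_V: "p \<in> paths \<Longrightarrow> endpoint p \<in> V"
  using walk_in_V[OF root_in_V] by (auto simp: paths_def endpoint_def)

lemma paths_prefix_closed: "p @ q \<in> paths \<Longrightarrow> p \<in> paths"
  by (auto simp: paths_def walk_append split: option.splits)

lemma snoc_in_paths: "p @ [i] \<in> paths \<longleftrightarrow> p \<in> paths \<and> i < length (tree_ch (endpoint p))"
  by (auto simp: paths_def endpoint_def walk_append split: option.splits)

lemma endpoint_snoc: "p @ [i] \<in> paths \<Longrightarrow> endpoint (p @ [i]) = tree_ch (endpoint p) ! i"
  by (auto simp: paths_def endpoint_def walk_append split: option.splits if_splits)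

lemma endpoint_snoc_child:
  assumes "p @ [i] \<in> paths"
  shows "endpoint (p @ [i]) \<in> set (ch (endpoint p))" and "endpoint (p @ [i]) \<noteq> r"
  using endpoint_snoc[OF assms] assms nth_mem[of i "tree_ch (endpoint p)"]
  by (auto simp: snoc_in_paths tree_ch_def)

lemma inj_on_endpoint: "inj_on endpoint paths"
proof (rule inj_onI)
  show "p \<in> paths \<Longrightarrow> q \<in> paths \<Longrightarrow> endpoint p = endpoint q \<Longrightarrow> p = q" for p q
  proof (induction p arbitrary: q rule: rev_induct)
    case Nil
    then show ?case
      by (cases q rule: rev_cases) (simp, metis endpoint_snoc_child(2) endpoint_Nil)
  next
    case (snoc i p)
    show ?case
    proof (cases q rule: rev_cases)
      case Nil
      then show ?thesis
        using snoc.prems endpoint_snoc_child(2) endpoint_Nil by auto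
    next
      case (snoc q' j)
      with snoc.prems have paths: "p \<in> paths" "q' \<in> paths"
        using paths_prefix_closed by blast+
      have "endpoint p = endpoint q'"
        using snoc.prems \<open>q = q' @ [j]\<close> endpoint_snoc_child(1) paths endpoint_in_V
        by (metis parent_eqI)
      then have "p = q'"
        using snoc.IH paths by blast
      moreover have "tree_ch (endpoint p) ! i = tree_ch (endpoint p) ! j"
        "i < length (tree_ch (endpoint p))" "j < length (tree_ch (endpoint p))"
        using endpoint_snoc snoc.prems \<open>q = q' @ [j]\<close> \<open>p = q'\<close> snoc_in_paths by metis+
      moreover have "distinct (tree_ch (endpoint p))"
        using distinct_children[OF endpoint_in_V[OF paths(1)]] by (simp add: tree_ch_def)
      ultimately show ?thesis
        using \<open>q = q' @ [j]\<close> nth_eq_iff_index_eq by blast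
    qed
  qed
qed

lemma length_path_less_card: "p \<in> paths \<Longrightarrow> length p < card V"
proof -
  assume p: "p \<in> paths"
  have prefixes: "take k p \<in> paths" for k
    using p paths_prefix_closed by (metis append_take_drop_id)
  have "inj_on (\<lambda>k. endpoint (take k p)) {0..length p}"
  proof (rule inj_onI)
    fix k k'
    assume "k \<in> {0..length p}" "k' \<in> {0..length p}" "endpoint (take k p) = endpoint (take k' p)"
    then show "k = k'"
      using inj_onD[OF inj_on_endpoint _ prefixes prefixes] by (metis atLeastAtMost_iff length_take min.absorb2)
  qed
  moreover have "(\<lambda>k. endpoint (take k p)) ` {0..length p} \<subseteq> V"
    using endpoint_in_V prefixes by auto
  ultimately have "card {0..length p} \<le> card V"
    using finite_V by (rule card_inj_on_le)
  then show ?thesis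
    by simp
qed

lemma root_in_endpoint_paths: "r \<in> endpoint ` paths"
  using rev_image_eqI[OF Nil_in_paths, of r endpoint] endpoint_Nil by simp

lemma child_in_endpoint_paths:
  assumes z: "z \<in> endpoint ` paths" and c: "c \<in> set (ch z)"
  shows "c \<in> endpoint ` paths"
proof (cases "c = r")
  case False
  obtain p where p: "p \<in> paths" "z = endpoint p"
    using z by blast
  with c False have "c \<in> set (tree_ch (endpoint p))"
    by (simp add: tree_ch_def)
  then obtain i where "i < length (tree_ch (endpoint p))" "tree_ch (endpoint p) ! i = c"
    by (auto simp: in_set_conv_nth)
  then have "p @ [i] \<in> paths" "c = endpoint (p @ [i])"
    using p snoc_in_paths endpoint_snoc by auto
  then show ?thesis
    by (rule rev_image_eqI)
qed (simp add: root_in_endpoint_paths)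

lemma ancestor_in_endpoint_paths: "z \<in> V \<Longrightarrow> (parent ^^ k) z = r \<Longrightarrow> z \<in> endpoint ` paths"
proof (induction k arbitrary: z)
  case (Suc k)
  then have "parent z \<in> endpoint ` paths"
    using parent_in_V by (simp add: funpow_swap1)
  then show ?case
    using child_in_endpoint_paths parent_in_V Suc.prems(1) by blast
qed (simp add: root_in_endpoint_paths)

lemma parent_in_endpoint_paths:
  assumes y: "y \<in> endpoint ` paths" and x: "x \<in> V" "y \<in> set (ch x)"
  shows "x \<in> endpoint ` paths"
proof -
  obtain p where p: "p \<in> paths" "y = endpoint p"
    using y by blast
  show ?thesis
  proof (cases p rule: rev_cases)
    case Nil
    obtain k where "(parent ^^ k) (parent r) = r"
      using root_on_cycle by blast
    moreover have "x = parent r"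
      using parent_eqI[OF x] p Nil endpoint_Nil by simp
    ultimately show ?thesis
      using ancestor_in_endpoint_paths parent_in_V[OF root_in_V] by blast
  next
    case (snoc p' i)
    then have p': "p' \<in> paths"
      using p paths_prefix_closed by blast
    have "parent y = endpoint p'"
      using parent_eqI[OF endpoint_in_V[OF p'] endpoint_snoc_child(1)] p snoc by simp
    moreover have "parent y = x"
      using parent_eqI[OF x] .
    ultimately show ?thesis
      using p' by blast
  qed
qed

lemma endpoint_paths: "endpoint ` paths = V"
proof
  show "endpoint ` paths \<subseteq> V"
    using endpoint_in_V by blast
  show "V \<subseteq> endpoint ` paths"
  proof
    fix y assume "y \<in> V"
    then have "(r, y) \<in> (pg_edges (V, ch) \<union> (pg_edges (V, ch))\<inverse>)\<^sup>*"
      using connected root_in_V by blast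
    then show "y \<in> endpoint ` paths"
    proof (induction rule: rtrancl_induct)
      case (step a b)
      from step.hyps(2) have "(a \<in> V \<and> b \<in> set (ch a)) \<or> (b \<in> V \<and> a \<in> set (ch b))"
        by (auto simp: pg_edges_def)
      then show ?case
        using step.IH child_in_endpoint_paths parent_in_endpoint_paths by blast
    qed (rule root_in_endpoint_paths)
  qed
qed

text \<open>Depth \<^term>\<open>card V\<close> suffices, as no path avoiding the cut edge repeats a vertex.\<close>

definition unfolded :: ptree where
  "unfolded = unfold_tree (card V) r"

lemma vertices_unfolded: "vertices unfolded = paths"
proof -
  have "p \<in> vertices unfolded \<longleftrightarrow> length p \<le> card V \<and> p \<in> paths" for p
    by (simp add: vertices_def unfolded_def subtree_unfold_tree paths_def)
  then show ?thesis
    using length_path_less_card less_imp_le by blast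
qed

lemma arity_unfolded: "p \<in> paths \<Longrightarrow> arity unfolded p = length (tree_ch (endpoint p))"
proof -
  assume p: "p \<in> paths"
  then have "card V - length p = Suc (card V - Suc (length p))"
    using length_path_less_card[OF p] by simp
  moreover have "subtree unfolded p = Some (unfold_tree (card V - length p) (endpoint p))"
    using p length_path_less_card[OF p] by (auto simp: unfolded_def subtree_unfold_tree paths_def endpoint_def)
  ultimately show ?thesis
    by (simp add: arity_def)
qed

lemma map_endpoint_snoc:
  assumes p: "p \<in> paths"
  shows "map (\<lambda>i. endpoint (p @ [i])) [0..<arity unfolded p] = tree_ch (endpoint p)"
proof -
  have "map (\<lambda>i. endpoint (p @ [i])) [0..<length (tree_ch (endpoint p))] =
      map (\<lambda>i. tree_ch (endpoint p) ! i) [0..<length (tree_ch (endpoint p))]"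
    using p by (intro map_cong) (auto simp: endpoint_snoc snoc_in_paths)
  then show ?thesis
    using p by (simp add: arity_unfolded map_nth)
qed

lemma tree_ch_eq:
  assumes "y \<in> V" "y \<noteq> parent r"
  shows "tree_ch y = ch y"
proof -
  have "r \<notin> set (ch y)"
    using assms parent_eqI by blast
  then show ?thesis
    unfolding tree_ch_def by (auto intro: filter_True)
qed

lemma ex_marked_tree_graph_iso: "\<exists>m\<in>marked. \<exists>h. pg_iso_map h (tree_graph m) (V, ch)"
proof -
  have parent_r: "parent r \<in> V" "r \<in> set (ch (parent r))"
    using parent_in_V[OF root_in_V] by simp_all
  then obtain v where v: "v \<in> paths" "endpoint v = parent r"
    using endpoint_paths by (metis imageE)
  obtain j where j: "j < length (ch (parent r))" "ch (parent r) ! j = r"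
    using parent_r(2) by (meson in_set_conv_nth)
  note insert_r = insert_at_filter_neq_nth_distinct[OF distinct_children[OF parent_r(1)] j(1),
      unfolded j(2), folded tree_ch_def]
  have marked: "(v, Suc j, unfolded) \<in> marked"
    using v j insert_r(2) by (auto simp: marked_def vertices_unfolded arity_unfolded)
  have "ch (endpoint p) = map endpoint (tree_children v (Suc j) unfolded p)" if p: "p \<in> paths" for p
  proof (cases "p = v")
    case True
    define cs where "cs = map (\<lambda>i. v @ [i]) [0..<arity unfolded v]"
    have "map endpoint cs = tree_ch (parent r)"
      using map_endpoint_snoc[OF v(1)] v(2) by (simp add: cs_def comp_def)
    moreover have "tree_children v (Suc j) unfolded p = take j cs @ [] # drop j cs"
      using True by (simp add: tree_children_def cs_def Let_def)
    ultimately show ?thesis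
      using insert_r(1) v(2) endpoint_Nil True by (simp add: take_map[symmetric] drop_map[symmetric])
  next
    case False
    then have "endpoint p \<noteq> parent r"
      using inj_onD[OF inj_on_endpoint _ p v(1)] v(2) by auto
    then show ?thesis
      using map_endpoint_snoc[OF p] tree_ch_eq endpoint_in_V[OF p] False
      by (simp add: tree_children_def comp_def)
  qed
  then have "pg_iso_map endpoint (tree_graph (v, Suc j, unfolded)) (V, ch)"
    using inj_on_endpoint endpoint_paths
    by (simp add: pg_iso_map_def bij_betw_def vertices_unfolded snd_tree_graph)
  with marked show ?thesis
    by blast
qed

end

lemma (in aroma_graph) ex_marked_tree_graph_iso: "\<exists>m\<in>marked. \<exists>h. pg_iso_map h (tree_graph m) (V, ch)"
proof -
  obtain r where "r \<in> V" "\<exists>k. (parent ^^ k) (parent r) = r"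
    using ex_vertex_on_cycle by blast
  then interpret rooted_aroma_graph V ch r
    by unfold_locales
  show ?thesis
    by (rule ex_marked_tree_graph_iso)
qed

section \<open>Pushforward of finitely supported functions\<close>

definition pushforward :: "('a \<Rightarrow> 'b) \<Rightarrow> ('a \<Rightarrow>\<^sub>0 'k::comm_monoid_add) \<Rightarrow> ('b \<Rightarrow>\<^sub>0 'k)" where
  "pushforward g f = (\<Sum>x\<in>Poly_Mapping.keys f. Poly_Mapping.single (g x) (Poly_Mapping.lookup f x))"

lemma pushforward_eq_sum:
  "finite S \<Longrightarrow> Poly_Mapping.keys f \<subseteq> S \<Longrightarrow>
   pushforward g f = (\<Sum>x\<in>S. Poly_Mapping.single (g x) (Poly_Mapping.lookup f x))"
  unfolding pushforward_def by (rule sum.mono_neutral_left) (auto simp: in_keys_iff)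

lemma pushforward_zero [simp]: "pushforward g 0 = 0"
  by (simp add: pushforward_def)

lemma pushforward_single [simp]: "pushforward g (Poly_Mapping.single x c) = Poly_Mapping.single (g x) c"
  by (cases "c = 0") (simp_all add: pushforward_def)

lemma pushforward_add: "pushforward g (f + f') = pushforward g f + pushforward g f'"
proof -
  let ?S = "Poly_Mapping.keys f \<union> Poly_Mapping.keys f'"
  have "Poly_Mapping.keys (f + f') \<subseteq> ?S"
    by (rule keys_add)
  then show ?thesis
    by (simp add: pushforward_eq_sum[of ?S] lookup_add single_add sum.distrib)
qed

lemma pushforward_sum: "pushforward g (\<Sum>i\<in>I. F i) = (\<Sum>i\<in>I. pushforward g (F i))"
  by (induction I rule: infinite_finite_induct) (simp_all add: pushforward_add)

lemma pushforward_diff: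
  "pushforward g (f - f') = pushforward g f - pushforward g (f' :: _ \<Rightarrow>\<^sub>0 'k::ab_group_add)"
  using pushforward_add[of g "f - f'" f'] by (simp add: eq_diff_eq)

lemma pushforward_pushforward: "pushforward h (pushforward g f) = pushforward (h \<circ> g) f"
  by (simp add: pushforward_def[of g] pushforward_sum) (simp add: pushforward_def)

lemma pushforward_id: "pushforward id f = f"
  by (rule poly_mapping_eqI) (simp add: pushforward_def lookup_sum lookup_single when_def in_keys_iff)

lemma surj_pushforward:
  assumes "surj g"
  shows "surj (pushforward g)"
proof (rule surjI)
  show "pushforward g (pushforward (inv g) f) = f" for f
    using assms by (simp add: pushforward_pushforward surj_iff pushforward_id)
qed

lemma lookup_fscale: "Poly_Mapping.lookup (fscale c f) x = c * Poly_Mapping.lookup f x"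
  unfolding fscale_def by transfer (simp add: when_def)

lemma fscale_zero: "fscale c 0 = 0"
  by (rule poly_mapping_eqI) (simp add: lookup_fscale)

lemma module_fscale: "module (fscale :: 'k::field \<Rightarrow> ('a \<Rightarrow>\<^sub>0 'k) \<Rightarrow> _)"
  by unfold_locales (auto intro!: poly_mapping_eqI simp: lookup_fscale lookup_add algebra_simps)

lemma single_diff_single:
  "Poly_Mapping.single x c - Poly_Mapping.single y c =
     fscale c (Poly_Mapping.single x 1 - Poly_Mapping.single y (1::'k::field))"
  by (rule poly_mapping_eqI) (simp add: lookup_fscale lookup_minus lookup_single when_def)

lemma pushforward_fscale: "pushforward g (fscale c f) = fscale c (pushforward g f)"
proof -
  have keys: "Poly_Mapping.keys (fscale c f) \<subseteq> Poly_Mapping.keys f"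
    by (auto simp: in_keys_iff lookup_fscale)
  have fscale_single: "fscale c (Poly_Mapping.single x d) = Poly_Mapping.single x (c * d)" for x d
    by (rule poly_mapping_eqI) (simp add: lookup_fscale lookup_single when_def)
  have "pushforward g (fscale c f) =
      (\<Sum>x\<in>Poly_Mapping.keys f. Poly_Mapping.single (g x) (c * Poly_Mapping.lookup f x))"
    by (simp add: pushforward_eq_sum[OF _ keys] lookup_fscale)
  also have "\<dots> = fscale c (pushforward g f)"
    by (simp add: pushforward_def fscale_single module.scale_sum_right[OF module_fscale])
  finally show ?thesis .
qed

text \<open>The kernel of a pushforward is spanned by differences of points in a common fibre: subtracting
  the pushforward along a section of \<open>g\<close> writes every \<open>f\<close> in the kernel as a combination of them.\<close>

lemma kernel_pushforward_eq_span:
  fixes g :: "'a \<Rightarrow> 'b" and S :: "('a \<Rightarrow>\<^sub>0 'k::field) set"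
  assumes S_kernel: "\<And>s. s \<in> S \<Longrightarrow> pushforward g s = 0"
    and fibres: "\<And>x y. g x = g y \<Longrightarrow>
       Poly_Mapping.single x 1 - Poly_Mapping.single y 1 \<in> module.span fscale S"
  shows "{f. pushforward g f = 0} = module.span fscale S"
proof
  interpret M: module "fscale :: 'k \<Rightarrow> ('a \<Rightarrow>\<^sub>0 'k) \<Rightarrow> _"
    by (rule module_fscale)
  show "M.span S \<subseteq> {f. pushforward g f = 0}"
  proof (rule M.span_minimal)
    show "S \<subseteq> {f. pushforward g f = 0}"
      using S_kernel by blast
    show "M.subspace {f. pushforward g f = 0}"
      unfolding M.subspace_def by (simp add: pushforward_add pushforward_fscale fscale_zero)
  qed
  show "{f. pushforward g f = 0} \<subseteq> M.span S"
  proof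
    fix f :: "'a \<Rightarrow>\<^sub>0 'k"
    assume "f \<in> {f. pushforward g f = 0}"
    define R where "R b = (SOME x. g x = b)" for b
    have R: "g (R (g x)) = g x" for x
      unfolding R_def by (rule someI_ex) blast
    have "pushforward (R \<circ> g) f = 0"
      using \<open>f \<in> _\<close> by (simp add: pushforward_pushforward[symmetric])
    then have "f = pushforward id f - pushforward (R \<circ> g) f"
      by (simp add: pushforward_id)
    also have "\<dots> = (\<Sum>x\<in>Poly_Mapping.keys f.
        Poly_Mapping.single x (Poly_Mapping.lookup f x) - Poly_Mapping.single (R (g x)) (Poly_Mapping.lookup f x))"
      by (simp add: pushforward_def sum_subtractf)
    also have "\<dots> = (\<Sum>x\<in>Poly_Mapping.keys f. fscale (Poly_Mapping.lookup f x)
        (Poly_Mapping.single x 1 - Poly_Mapping.single (R (g x)) 1))"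
      by (rule sum.cong[OF refl], rule single_diff_single)
    also have "\<dots> \<in> M.span S"
      using fibres[OF R[symmetric]] by (intro M.span_sum M.span_scale)
    finally show "f \<in> M.span S" .
  qed
qed

lemma rep_mpt_marked: "rep_mpt x \<in> marked"
  using rep_mpt by blast

lemma tau0_eq_iff: "tau0 x = tau0 y \<longleftrightarrow> pg_iso (tree_graph (rep_mpt x)) (tree_graph (rep_mpt y))"
proof -
  have raw: "raw_aroma (tree_graph (rep_mpt z))" for z
    using raw_aroma_tree_graph rep_mpt_marked by (metis prod_cases3)
  have closed: "\<forall>p\<in>fst (tree_graph (rep_mpt z)). set (snd (tree_graph (rep_mpt z)) p) \<subseteq> fst (tree_graph (rep_mpt z))" for z
    using tree_graph_closed by (metis prod_cases3)
  have "tau0 x = tau0 y \<longleftrightarrow> aroma_class (tree_graph (rep_mpt x)) = aroma_class (tree_graph (rep_mpt y))"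
    unfolding tau0_def using raw by (subst abs_aroma_inject) blast+
  also have "\<dots> \<longleftrightarrow> pg_iso (tree_graph (rep_mpt x)) (tree_graph (rep_mpt y))"
    using aroma_class_eq_if_iso[OF _ closed] raw pg_iso_map_id
    unfolding aroma_class_def pg_iso_iff_ex_map by blast
  finally show ?thesis .
qed

lemma tau0_mpt_comp0_commute: "tau0 (mpt_comp0 a b) = tau0 (mpt_comp0 b a)"
proof -
  obtain v1 n1 t1 v2 n2 t2 where "rep_mpt a = (v1, n1, t1)" "rep_mpt b = (v2, n2, t2)"
    by (metis prod_cases3)
  then show ?thesis
    using reroot_iso[of v2 n2 t2 v1 n1 t1] rep_mpt_marked[of a] rep_mpt_marked[of b]
    by (auto simp: tau0_eq_iff rep_mpt_comp0 pg_iso_iff_ex_map)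
qed

lemma tau0_fibres:
  assumes "tau0 x = tau0 y"
  shows "x = y \<or> (\<exists>a b. x = mpt_comp0 b a \<and> y = mpt_comp0 a b)"
proof -
  obtain f where "pg_iso_map f (tree_graph (rep_mpt x)) (tree_graph (rep_mpt y))"
    using assms by (auto simp: tau0_eq_iff pg_iso_iff_ex_map)
  then consider "rep_mpt y = rep_mpt x"
    | m1 m2 where "m1 \<in> marked" "m2 \<in> marked" "rep_mpt x = marked_comp m2 m1" "rep_mpt y = marked_comp m1 m2"
    using tree_graph_iso_cases rep_mpt_marked by metis
  then show ?thesis
  proof cases
    case 2
    then have "x = mpt_comp0 (abs_mpt m2) (abs_mpt m1)" "y = mpt_comp0 (abs_mpt m1) (abs_mpt m2)"
      by (simp_all add: rep_mpt_inject[symmetric] rep_mpt_comp0 abs_mpt_inverse)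
    then show ?thesis
      by blast
  qed (simp add: rep_mpt_inject)
qed

lemma surj_tau0: "surj tau0"
proof -
  have "\<exists>x. A = tau0 x" for A
  proof -
    obtain G where G: "raw_aroma G" "rep_aroma A = aroma_class G"
      using rep_aroma by blast
    obtain v n t h where m: "(v, n, t) \<in> marked" and h: "pg_iso_map h (tree_graph (v, n, t)) G"
      using aroma_graph.ex_marked_tree_graph_iso[of "fst G" "snd G"] G(1) by (auto simp: aroma_graph_def)
    have "aroma_class (tree_graph (v, n, t)) = aroma_class G"
      by (rule aroma_class_eq_if_iso[OF h tree_graph_closed])
    then have "tau0 (abs_mpt (v, n, t)) = A"
      using m by (simp add: tau0_def abs_mpt_inverse G(2)[symmetric] rep_aroma_inverse)
    then show ?thesis
      by metis
  qed
  then show ?thesis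
    unfolding surj_def by blast
qed

lemma tau_eq_pushforward: "tau = pushforward tau0"
  by (simp add: fun_eq_iff tau_def pushforward_def)

lemma mpt_comp_single:
  "mpt_comp (Poly_Mapping.single a 1) (Poly_Mapping.single b 1) = Poly_Mapping.single (mpt_comp0 a b) (1::'k::field)"
  by (simp add: mpt_comp_def)

lemma tau_mpt_comp_commute:
  fixes a b :: "mpt \<Rightarrow>\<^sub>0 'k::field"
  shows "tau (mpt_comp a b) = tau (mpt_comp b a)"
proof -
  have "tau (mpt_comp a b) = (\<Sum>x\<in>Poly_Mapping.keys a. \<Sum>y\<in>Poly_Mapping.keys b.
      Poly_Mapping.single (tau0 (mpt_comp0 x y)) (Poly_Mapping.lookup a x * Poly_Mapping.lookup b y))"
    for a b :: "mpt \<Rightarrow>\<^sub>0 'k"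
    by (simp add: mpt_comp_def tau_eq_pushforward pushforward_sum)
  then show ?thesis
    by (simp add: sum.swap[of _ "Poly_Mapping.keys a"] tau0_mpt_comp0_commute mult.commute)
qed

lemma single_diff_single_in_commutators:
  assumes "tau0 x = tau0 y"
  shows "Poly_Mapping.single x 1 - Poly_Mapping.single y (1::'k::field) \<in> mpt_commutators"
  using tau0_fibres[OF assms]
proof
  interpret M: module "fscale :: 'k \<Rightarrow> (mpt \<Rightarrow>\<^sub>0 'k) \<Rightarrow> _"
    by (rule module_fscale)
  assume "\<exists>a b. x = mpt_comp0 b a \<and> y = mpt_comp0 a b"
  then obtain a b where "x = mpt_comp0 b a" "y = mpt_comp0 a b"
    by blast
  then have "Poly_Mapping.single x 1 - Poly_Mapping.single y (1::'k) =
      mpt_comp (Poly_Mapping.single b 1) (Poly_Mapping.single a 1) -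
      mpt_comp (Poly_Mapping.single a 1) (Poly_Mapping.single b 1)"
    by (simp add: mpt_comp_single)
  then show ?thesis
    unfolding mpt_commutators_def by (simp only:) (rule M.span_base, blast)
qed (simp add: mpt_commutators_def module.span_zero[OF module_fscale])

theorem mainTheorem8:
  shows "surj (tau :: (mpt \<Rightarrow>\<^sub>0 'k::field) \<Rightarrow> (aroma \<Rightarrow>\<^sub>0 'k)) \<and>
         {f :: mpt \<Rightarrow>\<^sub>0 'k. tau f = 0} = mpt_commutators"
proof
  show "surj (tau :: (mpt \<Rightarrow>\<^sub>0 'k) \<Rightarrow> _)"
    unfolding tau_eq_pushforward by (rule surj_pushforward[OF surj_tau0])
  show "{f :: mpt \<Rightarrow>\<^sub>0 'k. tau f = 0} = mpt_commutators"
    unfolding tau_eq_pushforward mpt_commutators_def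
  proof (rule kernel_pushforward_eq_span)
    show "pushforward tau0 s = 0" if "s \<in> {mpt_comp a b - mpt_comp b a |a b. True}" for s :: "mpt \<Rightarrow>\<^sub>0 'k"
      using that tau_mpt_comp_commute by (auto simp: tau_eq_pushforward pushforward_diff)
  qed (use single_diff_single_in_commutators in \<open>simp add: mpt_commutators_def\<close>)
qed

end
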